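(* Let $X$ and $Y$ be Banach spaces and $f\colon X\to Y$ a coarse map (i.e. $\omega_f(t)<\infty$ for all $t\ge0$). Then there exist an index set $I$, a nonprincipal ultrafilter $\mathcal U$ on $I$, and a map $F\colon X\to \ell_1(Y)^I/\mathcal U$ such that for all $x,y\in X$, $$\rho_f(\|x-y\|)\le\|F(x)-F(y)\|\le\omega_f(\|x-y\|)\quad\text{and}\quad \|F(x)-F(y)\|=\|F(x-y)\|.$$
   Context: $\omega_f(t)=\sup\{\|f(x)-f(y)\|:\|x-y\|\le t\}$, $\rho_f(t)=\inf\{\|f(x)-f(y)\|:\|x-y\|\ge t\}$. $\ell_1(Y)$ is the $\ell_1$-sum of countably many copies of $Y$. For a Banach space $Z$, an index set $I$ and a nonprincipal ultrafilter $\mathcal U$ on $I$, the ultrapower $Z^I/\mathcal U$ is the space of norm-bounded families $(z_i)_{i\in I}$ modulo $(z_i)\sim(w_i)$ iff $\lim_{i,\mathcal U}\|z_i-w_i\|=0$, with norm $\lim_{i,\mathcal U}\|z_i\|$. *)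

theory Defs
  imports "HOL-Analysis.Analysis"
begin

definition omega_mod :: "('a::real_normed_vector \<Rightarrow> 'b::real_normed_vector) \<Rightarrow> real \<Rightarrow> real" where
  "omega_mod f t = Sup {norm (f x - f y) | x y. norm (x - y) \<le> t}"

definition rho_mod :: "('a::real_normed_vector \<Rightarrow> 'b::real_normed_vector) \<Rightarrow> real \<Rightarrow> real" where
  "rho_mod f t = Inf {norm (f x - f y) | x y. norm (x - y) \<ge> t}"

definition coarse_map :: "('a::real_normed_vector \<Rightarrow> 'b::real_normed_vector) \<Rightarrow> bool" where
  "coarse_map f \<longleftrightarrow> (\<forall>t\<ge>0. bdd_above {norm (f x - f y) | x y. norm (x - y) \<le> t})"

definition l1_sum :: "(nat \<Rightarrow> 'b::real_normed_vector) set" where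
  "l1_sum = {z. summable (\<lambda>n. norm (z n))}"

definition l1_norm :: "(nat \<Rightarrow> 'b::real_normed_vector) \<Rightarrow> real" where
  "l1_norm z = (\<Sum>n. norm (z n))"

definition ultrafilter_on :: "'i set \<Rightarrow> 'i filter \<Rightarrow> bool" where
  "ultrafilter_on I U \<longleftrightarrow> U \<noteq> bot \<and> eventually (\<lambda>i. i \<in> I) U \<and>
     (\<forall>P. eventually P U \<or> eventually (\<lambda>i. \<not> P i) U)"

definition nonprincipal :: "'i filter \<Rightarrow> bool" where
  "nonprincipal U \<longleftrightarrow> (\<forall>j. eventually (\<lambda>i. i \<noteq> j) U)"

text \<open>Representatives of elements of the ultrapower ell_1(Y)^I / U:
  norm-bounded families indexed by I.\<close>
definition ultrapower_reps :: "'i set \<Rightarrow> ('i \<Rightarrow> nat \<Rightarrow> 'b::real_normed_vector) set" where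
  "ultrapower_reps I = {g. (\<forall>i\<in>I. g i \<in> l1_sum) \<and> (\<exists>B. \<forall>i\<in>I. l1_norm (g i) \<le> B)}"

definition ultrapower_norm :: "'i filter \<Rightarrow> ('i \<Rightarrow> nat \<Rightarrow> 'b::real_normed_vector) \<Rightarrow> real" where
  "ultrapower_norm U g = Lim U (\<lambda>i. l1_norm (g i))"

end

theory Submission
  imports Defs
begin

text \<open>Average the increments \<open>p \<mapsto> f (x + p) - f p\<close> over a large finite grid of base points
  \<open>p\<close>, placing the averaged increments in distinct coordinates of \<open>\<ell>\<^sub>1(Y)\<close>. The \<open>\<ell>\<^sub>1\<close>-norm of
  the difference of two such vectors is the grid average of \<open>\<parallel>f (x + p) - f (y + p)\<parallel>\<close>,
  which lies between \<open>\<rho>\<^sub>f(\<parallel>x - y\<parallel>)\<close> and \<open>\<omega>\<^sub>f(\<parallel>x - y\<parallel>)\<close>. The grids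
  \<open>{\<Sum>\<^sub>k j\<^sub>k s\<^sub>k | j\<^sub>k < N}\<close> form a Folner sequence for the finitely generated subgroups of
  \<open>X\<close>: translating by a generator changes a grid average of a bounded function by \<open>O(1/N)\<close>.
  Passing to an ultrafilter that refines "all generators eventually occur and \<open>N \<rightarrow> \<infinity>\<close>"
  turns these averages into a translation-invariant mean, and translating by \<open>y\<close> gives
  \<open>\<parallel>F x - F y\<parallel> = \<parallel>F (x - y)\<parallel>\<close>.\<close>

lemma maximal_proper_filter_ultra:
  assumes "F \<noteq> bot"
    and maximal: "\<And>G. G \<noteq> bot \<Longrightarrow> G \<le> F \<Longrightarrow> F = G"
  shows "eventually P F \<or> eventually (\<lambda>x. \<not> P x) F"
proof (rule disjCI)
  assume "\<not> eventually (\<lambda>x. \<not> P x) F"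
  then have "inf F (principal {x. P x}) \<noteq> bot"
    by (simp add: trivial_limit_def eventually_inf_principal)
  then have F: "F = inf F (principal {x. P x})"
    by (rule maximal) simp
  show "eventually P F"
    by (subst F) (simp add: eventually_inf_principal)
qed

lemma exists_ultrafilter_le:
  fixes F :: "'a filter"
  assumes F: "F \<noteq> bot"
  shows "\<exists>U\<le>F. ultrafilter_on UNIV U"
proof -
  let ?R = "{(G, H). H \<noteq> bot \<and> H \<le> G \<and> G \<le> F}"
  have bot_notin_chain: "bot \<notin> C" if "C \<in> Chains ?R" for C
    using that by (auto simp: Chains_def)
  have [simp]: "Field ?R = {G. G \<noteq> bot \<and> G \<le> F}"
    by (auto simp: Field_def bot_unique)
  have "\<exists>U\<in>Field ?R. \<forall>G\<in>Field ?R. (U, G) \<in> ?R \<longrightarrow> G = U"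
  proof (rule Zorns_po_lemma)
    show "Partial_order ?R"
      by (auto simp: partial_order_on_def preorder_on_def
          antisym_def refl_on_def trans_def Field_def bot_unique)
    show "\<exists>u\<in>Field ?R. \<forall>G\<in>C. (G, u) \<in> ?R" if C: "C \<in> Chains ?R" for C
    proof (simp, intro exI conjI ballI)
      \<comment> \<open>\<open>inf F\<close> makes the bound work for the empty chain as well\<close>
      have Inf_C: "Inf C \<noteq> bot" "Inf C \<le> F" if "C \<noteq> {}"
      proof -
        from C that have "Inf C = bot \<longleftrightarrow> (\<exists>G\<in>C. G = bot)"
          unfolding trivial_limit_def by (intro eventually_Inf_base) (auto simp: Chains_def)
        with C show "Inf C \<noteq> bot"
          by (simp add: bot_notin_chain)
        from that obtain G where "G \<in> C" by auto
        with C show "Inf C \<le> F"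
          by (auto intro!: Inf_lower2[of G] simp: Chains_def)
      qed
      then have [simp]: "inf F (Inf C) = (if C = {} then F else Inf C)"
        using C by (auto simp add: inf_absorb2)
      from C show "inf F (Inf C) \<noteq> bot"
        by (simp add: F Inf_C)
      from C show "inf F (Inf C) \<le> F"
        by (simp add: Chains_def Inf_C F)
      with C show "inf F (Inf C) \<le> G" "G \<le> F" if "G \<in> C" for G
        using that by (auto intro: Inf_lower simp: Chains_def)
    qed
  qed
  then obtain U where U: "U \<in> Field ?R" "\<forall>G\<in>Field ?R. (U, G) \<in> ?R \<longrightarrow> G = U" ..
  have "U \<le> F" "U \<noteq> bot"
    using U(1) by auto
  moreover have "\<forall>P. eventually P U \<or> eventually (\<lambda>x. \<not> P x) U"
    using U by (intro allI maximal_proper_filter_ultra) auto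
  ultimately show ?thesis
    unfolding ultrafilter_on_def by auto
qed

lemma ultrafilter_bounded_tendsto_Lim:
  fixes g :: "'i \<Rightarrow> real"
  assumes U: "ultrafilter_on I U" and bounded: "eventually (\<lambda>i. \<bar>g i\<bar> \<le> B) U"
  shows "(g \<longlongrightarrow> Lim U g) U"
proof -
  have U_proper: "U \<noteq> bot" and ultra: "\<And>P. eventually P U \<or> eventually (\<lambda>i. \<not> P i) U"
    using U unfolding ultrafilter_on_def by blast+
  have "filtermap g U \<noteq> bot"
    using U_proper by (simp add: filtermap_bot_iff)
  moreover have "eventually (\<lambda>x. x \<in> {-B..B}) (filtermap g U)"
    unfolding eventually_filtermap using bounded by (rule eventually_mono) (simp add: abs_le_iff)
  ultimately obtain L where L: "inf (nhds L) (filtermap g U) \<noteq> bot"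
    using compact_Icc unfolding compact_filter by blast
  \<comment> \<open>a cluster point of a function along an ultrafilter is its limit\<close>
  have lim: "(g \<longlongrightarrow> L) U"
  proof (rule topological_tendstoI)
    fix S assume "open S" "L \<in> S"
    show "eventually (\<lambda>i. g i \<in> S) U"
    proof (rule ccontr)
      assume "\<not> eventually (\<lambda>i. g i \<in> S) U"
      then have "eventually (\<lambda>x. x \<notin> S) (filtermap g U)"
        using ultra[of "\<lambda>i. g i \<in> S"] by (simp add: eventually_filtermap)
      moreover have "eventually (\<lambda>x. x \<in> S) (nhds L)"
        using \<open>open S\<close> \<open>L \<in> S\<close> by (rule eventually_nhds_in_open)
      ultimately have "eventually (\<lambda>x. False) (inf (nhds L) (filtermap g U))"
        unfolding eventually_inf by blast
      with L show False
        by (simp add: trivial_limit_def)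
    qed
  qed
  moreover from U_proper lim have "Lim U g = L"
    by (rule tendsto_Lim)
  ultimately show ?thesis
    by simp
qed

lemma ultrafilter_Lim_bounds:
  fixes g :: "'i \<Rightarrow> real"
  assumes U: "ultrafilter_on I U" and bounds: "\<And>i. a \<le> g i \<and> g i \<le> b"
  shows "a \<le> Lim U g \<and> Lim U g \<le> b"
proof -
  have U_proper: "\<not> trivial_limit U"
    using U by (simp add: ultrafilter_on_def)
  have "\<bar>g i\<bar> \<le> \<bar>a\<bar> + \<bar>b\<bar>" for i
    using bounds[of i] by linarith
  then have lim: "(g \<longlongrightarrow> Lim U g) U"
    by (intro ultrafilter_bounded_tendsto_Lim[OF U] always_eventually allI)
  have "a \<le> Lim U g"
    using lim _ U_proper by (rule tendsto_lowerbound) (simp add: bounds)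
  moreover have "Lim U g \<le> b"
    using lim _ U_proper by (rule tendsto_upperbound) (simp add: bounds)
  ultimately show ?thesis ..
qed

fun grid :: "nat \<Rightarrow> 'a::real_vector list \<Rightarrow> 'a list" where
  "grid N [] = [0]"
| "grid N (s # L) = concat (map (\<lambda>j. map (\<lambda>p. p + real j *\<^sub>R s) (grid N L)) [0..<N])"

lemma length_grid: "length (grid N L) = N ^ length L"
  by (induction L) (simp_all add: length_concat o_def sum_list_triv)

definition grid_mean :: "nat \<Rightarrow> 'a::real_vector list \<Rightarrow> ('a \<Rightarrow> real) \<Rightarrow> real" where
  "grid_mean N L g = sum_list (map g (grid N L)) / real (length (grid N L))"

lemma sum_list_map_concat_map:
  "sum_list (map g (concat (map h xs))) = (\<Sum>x\<leftarrow>xs. sum_list (map g (h x)))"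
  by (induction xs) auto

lemma grid_mean_Cons:
  assumes "N > 0"
  shows "grid_mean N (s # L) g = (\<Sum>j<N. grid_mean N L (\<lambda>p. g (p + real j *\<^sub>R s))) / real N"
proof -
  have "sum_list (map g (grid N (s # L)))
      = (\<Sum>j<N. sum_list (map (\<lambda>p. g (p + real j *\<^sub>R s)) (grid N L)))"
    by (simp add: sum_list_map_concat_map o_def interv_sum_list_conv_sum_set_nat lessThan_atLeast0)
  moreover have "real (length (grid N (s # L))) = real N * real (length (grid N L))"
    by (simp only: length_grid) simp
  moreover have "real (length (grid N L)) > 0"
    using assms by (simp add: length_grid)
  ultimately show ?thesis
    unfolding grid_mean_def by (simp add: sum_divide_distrib mult.commute)
qed

lemma grid_mean_bounds:
  assumes "N > 0" "\<And>p. a \<le> g p" "\<And>p. g p \<le> b"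
  shows "a \<le> grid_mean N L g \<and> grid_mean N L g \<le> b"
proof -
  have "a * real (length P) \<le> sum_list (map g P) \<and> sum_list (map g P) \<le> b * real (length P)"
    for P :: "'a list"
    using assms by (induction P) (auto simp: algebra_simps add_mono)
  moreover have "real (length (grid N L)) > 0"
    using assms(1) by (simp add: length_grid)
  ultimately show ?thesis
    by (simp add: grid_mean_def field_simps)
qed

lemma grid_mean_abs_le:
  assumes "N > 0" "\<And>p. \<bar>g p\<bar> \<le> B"
  shows "\<bar>grid_mean N L g\<bar> \<le> B"
proof -
  have "-B \<le> g p \<and> g p \<le> B" for p
    using assms(2)[of p] by linarith
  then have "-B \<le> grid_mean N L g \<and> grid_mean N L g \<le> B"
    using grid_mean_bounds[OF assms(1), of "-B" g B] by blast
  then show ?thesis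
    by (auto simp: abs_le_iff)
qed

lemma grid_mean_translate_head:
  assumes N: "N > 0" and bounded: "\<And>p. \<bar>g p\<bar> \<le> B"
  shows "\<bar>grid_mean N (s # L) (\<lambda>p. g (p + s)) - grid_mean N (s # L) g\<bar> \<le> 2 * B / real N"
proof -
  define m where "m j = grid_mean N L (\<lambda>p. g (p + real j *\<^sub>R s))" for j
  \<comment> \<open>translating by \<open>s\<close> shifts the slices \<open>j = 0, \<dots>, N - 1\<close> to \<open>j = 1, \<dots>, N\<close>, so the sum telescopes\<close>
  have "grid_mean N (s # L) (\<lambda>p. g (p + s)) = (\<Sum>j<N. m (Suc j)) / real N"
    unfolding grid_mean_Cons[OF N] m_def by (simp add: algebra_simps)
  moreover have "grid_mean N (s # L) g = (\<Sum>j<N. m j) / real N"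
    unfolding grid_mean_Cons[OF N] m_def by simp
  ultimately have diff: "grid_mean N (s # L) (\<lambda>p. g (p + s)) - grid_mean N (s # L) g = (m N - m 0) / real N"
    by (simp add: diff_divide_distrib[symmetric] sum_subtractf[symmetric] sum_lessThan_telescope)
  have m_bounded: "\<bar>m j\<bar> \<le> B" for j
    unfolding m_def using N bounded by (rule grid_mean_abs_le)
  then have "\<bar>m N - m 0\<bar> \<le> 2 * B"
    using m_bounded[of N] m_bounded[of 0] abs_triangle_ineq4[of "m N" "m 0"] by linarith
  then show ?thesis
    unfolding diff using N by (simp add: divide_right_mono)
qed

lemma grid_mean_translate:
  assumes N: "N > 0" and bounded: "\<And>p. \<bar>g p\<bar> \<le> B" and t: "t \<in> set L"
  shows "\<bar>grid_mean N L (\<lambda>p. g (p + t)) - grid_mean N L g\<bar> \<le> 2 * B / real N"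
  using bounded t
proof (induction L arbitrary: g)
  case Nil
  then show ?case by simp
next
  case (Cons s L)
  show ?case
  proof (cases "t = s")
    case True
    then show ?thesis
      using grid_mean_translate_head[OF N Cons.prems(1)] by simp
  next
    case False
    define d where "d j = grid_mean N L (\<lambda>p. g (p + t + real j *\<^sub>R s)) - grid_mean N L (\<lambda>p. g (p + real j *\<^sub>R s))" for j
    have diff: "grid_mean N (s # L) (\<lambda>p. g (p + t)) - grid_mean N (s # L) g = (\<Sum>j<N. d j) / real N"
      unfolding grid_mean_Cons[OF N] d_def
      by (simp add: diff_divide_distrib[symmetric] sum_subtractf add_ac)
    have d_bound: "\<bar>d j\<bar> \<le> 2 * B / real N" for j
      unfolding d_def using Cons.prems(1) False Cons.prems(2) by (intro Cons.IH) simp_all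
    have "\<bar>\<Sum>j<N. d j\<bar> \<le> 2 * B"
    proof -
      have "\<bar>\<Sum>j<N. d j\<bar> \<le> (\<Sum>j<N. \<bar>d j\<bar>)"
        by (rule sum_abs)
      also have "\<dots> \<le> (\<Sum>j<N. 2 * B / real N)"
        by (rule sum_mono) (rule d_bound)
      also have "\<dots> = 2 * B"
        using N by simp
      finally show ?thesis .
    qed
    then show ?thesis
      unfolding diff abs_divide using N by (simp add: divide_right_mono)
  qed
qed

definition l1_average :: "'a list \<Rightarrow> ('a \<Rightarrow> 'b::real_normed_vector) \<Rightarrow> nat \<Rightarrow> 'b" where
  "l1_average P v k = (if k < length P then v (P ! k) /\<^sub>R real (length P) else 0)"

lemma l1_average_in_l1_sum: "l1_average P v \<in> l1_sum"
  unfolding l1_sum_def l1_average_def mem_Collect_eq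
  by (rule summable_finite[of "{..<length P}"]) auto

lemma l1_norm_l1_average: "l1_norm (l1_average P v) = (\<Sum>p\<leftarrow>P. norm (v p)) / real (length P)"
proof -
  have "l1_norm (l1_average P v) = (\<Sum>k<length P. norm (v (P ! k)) / real (length P))"
    unfolding l1_norm_def l1_average_def
    by (subst suminf_finite[of "{..<length P}"]) (auto simp: divide_inverse_commute)
  then show ?thesis
    by (simp add: sum_divide_distrib[symmetric] sum_list_sum_nth atLeast0LessThan)
qed

lemma l1_average_diff: "l1_average P v - l1_average P w = l1_average P (\<lambda>p. v p - w p)"
  by (auto simp: fun_eq_iff l1_average_def scaleR_diff_right[symmetric] simp del: scaleR_diff_right)

definition list_of_set :: "'a set \<Rightarrow> 'a list" where
  "list_of_set S = (SOME L. set L = S)"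

lemma set_list_of_set: "finite S \<Longrightarrow> set (list_of_set S) = S"
  unfolding list_of_set_def by (rule someI_ex) (rule finite_list)

text \<open>An index \<open>(S, N)\<close> of the ultrapower stands for the grid spanned by the finite set \<open>S\<close> with
  \<open>N + 1\<close> points per generator; the \<open>+ 1\<close> avoids the empty grid.\<close>

definition grid_mean_at :: "'a::real_vector set \<times> nat \<Rightarrow> ('a \<Rightarrow> real) \<Rightarrow> real" where
  "grid_mean_at i g = grid_mean (Suc (snd i)) (list_of_set (fst i)) g"

definition coarse_embedding :: "('a::real_normed_vector \<Rightarrow> 'b::real_normed_vector) \<Rightarrow> 'a \<Rightarrow> 'a set \<times> nat \<Rightarrow> nat \<Rightarrow> 'b" where
  "coarse_embedding f x i = l1_average (grid (Suc (snd i)) (list_of_set (fst i))) (\<lambda>p. f (x + p) - f p)"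

lemma l1_norm_coarse_embedding_diff:
  "l1_norm (coarse_embedding f x i - coarse_embedding f y i) = grid_mean_at i (\<lambda>p. norm (f (x + p) - f (y + p)))"
  by (simp add: coarse_embedding_def grid_mean_at_def grid_mean_def l1_average_diff l1_norm_l1_average o_def)

lemma l1_norm_coarse_embedding:
  "l1_norm (coarse_embedding f x i) = grid_mean_at i (\<lambda>p. norm (f (x + p) - f p))"
  by (simp add: coarse_embedding_def grid_mean_at_def grid_mean_def l1_norm_l1_average o_def)

lemma norm_le_omega_mod:
  assumes "coarse_map f" "norm (a - b) \<le> t"
  shows "norm (f a - f b) \<le> omega_mod f t"
proof -
  have "t \<ge> 0"
    using assms(2) norm_ge_zero order_trans by blast
  then have "bdd_above {norm (f x - f y) | x y. norm (x - y) \<le> t}"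
    using assms(1) unfolding coarse_map_def by simp
  then show ?thesis
    unfolding omega_mod_def by (rule cSup_upper[rotated]) (use assms(2) in blast)
qed

lemma rho_mod_le_norm: "t \<le> norm (a - b) \<Longrightarrow> rho_mod f t \<le> norm (f a - f b)"
  unfolding rho_mod_def by (rule cInf_lower) (auto intro: bdd_belowI[of _ 0])

definition grid_filter :: "('a set \<times> nat) filter" where
  "grid_filter = finite_sets_at_top \<times>\<^sub>F sequentially"

lemma grid_filter_neq_bot: "grid_filter \<noteq> bot"
  by (simp add: grid_filter_def prod_filter_eq_bot)

lemma eventually_grid_filter_mem: "eventually (\<lambda>i. finite (fst i) \<and> t \<in> fst i) grid_filter"
proof -
  have "eventually (\<lambda>S. finite S \<and> t \<in> S) finite_sets_at_top"
    by (auto simp: eventually_finite_subsets_at_top intro!: exI[of _ "{t}"])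
  then show ?thesis
    unfolding grid_filter_def using eventually_prodI[of _ _ "\<lambda>_. True"] by auto
qed

lemma filterlim_snd_grid_filter: "filterlim snd sequentially grid_filter"
  unfolding filterlim_def grid_filter_def by (rule filtermap_snd_prod_filter)

lemma nonprincipal_if_le_grid_filter:
  assumes "U \<le> grid_filter"
  shows "nonprincipal U"
  unfolding nonprincipal_def
proof
  fix j :: "'a set \<times> nat"
  have "filterlim snd sequentially U"
    using filterlim_mono[OF filterlim_snd_grid_filter order_refl assms] .
  then have "eventually (\<lambda>i. snd j < snd i) U"
    using eventually_gt_at_top[of "snd j"] by (auto simp: filterlim_iff)
  then show "eventually (\<lambda>i. i \<noteq> j) U"
    by (rule eventually_mono) auto
qed

lemma Lim_grid_mean_at_translate:
  assumes U: "ultrafilter_on I U" "U \<le> grid_filter" and bounded: "\<And>p. \<bar>g p\<bar> \<le> B"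
  shows "Lim U (\<lambda>i. grid_mean_at i (\<lambda>p. g (p + t))) = Lim U (\<lambda>i. grid_mean_at i g)"
proof -
  let ?m = "\<lambda>h i. grid_mean_at i h"
  have bounded_mean: "\<bar>?m h i\<bar> \<le> B" if "\<And>p. \<bar>h p\<bar> \<le> B" for h i
    unfolding grid_mean_at_def using that by (simp add: grid_mean_abs_le)
  have lim_mean: "(?m h \<longlongrightarrow> Lim U (?m h)) U" if "\<And>p. \<bar>h p\<bar> \<le> B" for h
    using that by (intro ultrafilter_bounded_tendsto_Lim[OF U(1), where B = B] always_eventually allI bounded_mean)
  have lim_translated: "(?m (\<lambda>p. g (p + t)) \<longlongrightarrow> Lim U (?m (\<lambda>p. g (p + t)))) U"
    and lim: "(?m g \<longlongrightarrow> Lim U (?m g)) U"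
    using bounded by (blast intro: lim_mean)+
  have "eventually (\<lambda>i. norm (?m (\<lambda>p. g (p + t)) i - ?m g i) \<le> 2 * B / real (Suc (snd i))) U"
    using filter_leD[OF U(2) eventually_grid_filter_mem[of t]]
  proof (rule eventually_mono)
    fix i :: "'a set \<times> nat"
    assume "finite (fst i) \<and> t \<in> fst i"
    then have "t \<in> set (list_of_set (fst i))"
      by (simp add: set_list_of_set)
    from grid_mean_translate[OF zero_less_Suc bounded this]
    show "norm (?m (\<lambda>p. g (p + t)) i - ?m g i) \<le> 2 * B / real (Suc (snd i))"
      by (simp only: grid_mean_at_def real_norm_def)
  qed
  moreover have "((\<lambda>i. 2 * B / real (Suc (snd i))) \<longlongrightarrow> 0) U"
  proof (rule filterlim_compose[of "\<lambda>n. 2 * B / real (Suc n)"])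
    show "(\<lambda>n. 2 * B / real (Suc n)) \<longlonglongrightarrow> 0"
      using LIMSEQ_Suc[OF lim_const_over_n[of "2 * B"]] by simp
    show "filterlim snd sequentially U"
      using filterlim_mono[OF filterlim_snd_grid_filter order_refl U(2)] .
  qed
  ultimately have lim_diff: "((\<lambda>i. ?m (\<lambda>p. g (p + t)) i - ?m g i) \<longlongrightarrow> 0) U"
    by (rule Lim_null_comparison)
  have "U \<noteq> bot"
    using U(1) by (simp add: ultrafilter_on_def)
  then have "Lim U (?m (\<lambda>p. g (p + t))) - Lim U (?m g) = 0"
    using tendsto_diff[OF lim_translated lim] lim_diff by (rule tendsto_unique)
  then show ?thesis
    by (simp only: right_minus_eq)
qed

lemma coarse_embedding_in_ultrapower_reps:
  assumes "coarse_map f"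
  shows "coarse_embedding f x \<in> ultrapower_reps I"
proof -
  have "norm (f (x + p) - f p) \<le> omega_mod f (norm x)" for p
    by (rule norm_le_omega_mod[OF assms]) simp
  then have "l1_norm (coarse_embedding f x i) \<le> omega_mod f (norm x)" for i
    unfolding l1_norm_coarse_embedding grid_mean_at_def
    by (intro grid_mean_bounds[of _ 0, THEN conjunct2]) simp_all
  moreover have "coarse_embedding f x i \<in> l1_sum" for i
    by (simp add: coarse_embedding_def l1_average_in_l1_sum)
  ultimately show ?thesis
    unfolding ultrapower_reps_def by blast
qed

lemma coarse_embedding_bounds:
  assumes "coarse_map f" "ultrafilter_on I U"
  shows "rho_mod f (norm (x - y)) \<le> ultrapower_norm U (\<lambda>i. coarse_embedding f x i - coarse_embedding f y i)
    \<and> ultrapower_norm U (\<lambda>i. coarse_embedding f x i - coarse_embedding f y i) \<le> omega_mod f (norm (x - y))"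
proof -
  have "norm ((x + p) - (y + p)) = norm (x - y)" for p
    by (simp add: algebra_simps)
  then have "rho_mod f (norm (x - y)) \<le> grid_mean_at i (\<lambda>p. norm (f (x + p) - f (y + p)))
      \<and> grid_mean_at i (\<lambda>p. norm (f (x + p) - f (y + p))) \<le> omega_mod f (norm (x - y))" for i
    unfolding grid_mean_at_def
    by (intro grid_mean_bounds) (auto intro: rho_mod_le_norm norm_le_omega_mod[OF assms(1)])
  then show ?thesis
    unfolding ultrapower_norm_def l1_norm_coarse_embedding_diff
    by (rule ultrafilter_Lim_bounds[OF assms(2)])
qed

lemma coarse_embedding_translate:
  assumes "coarse_map f" "ultrafilter_on I U" "U \<le> grid_filter"
  shows "ultrapower_norm U (\<lambda>i. coarse_embedding f x i - coarse_embedding f y i)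
    = ultrapower_norm U (coarse_embedding f (x - y))"
proof -
  let ?g = "\<lambda>p. norm (f (x - y + p) - f p)"
  have "\<bar>?g p\<bar> \<le> omega_mod f (norm (x - y))" for p
    using norm_le_omega_mod[OF assms(1)] by simp
  then have "Lim U (\<lambda>i. grid_mean_at i (\<lambda>p. ?g (p + y))) = Lim U (\<lambda>i. grid_mean_at i ?g)"
    using assms(2,3) by (rule Lim_grid_mean_at_translate[rotated 2])
  moreover have "(\<lambda>p. ?g (p + y)) = (\<lambda>p. norm (f (x + p) - f (y + p)))"
    by (simp add: algebra_simps)
  ultimately show ?thesis
    unfolding ultrapower_norm_def l1_norm_coarse_embedding_diff l1_norm_coarse_embedding
    by (simp only:)
qed

theorem theorem3p1:
  fixes f :: "'a::banach \<Rightarrow> 'b::banach"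
  assumes "coarse_map f"
  shows "\<exists>(I :: ('a set \<times> nat) set) U (F :: 'a \<Rightarrow> ('a set \<times> nat) \<Rightarrow> nat \<Rightarrow> 'b).
           ultrafilter_on I U \<and> nonprincipal U \<and> (\<forall>x. F x \<in> ultrapower_reps I) \<and>
           (\<forall>x y. rho_mod f (norm (x - y)) \<le> ultrapower_norm U (\<lambda>i. F x i - F y i) \<and>
                  ultrapower_norm U (\<lambda>i. F x i - F y i) \<le> omega_mod f (norm (x - y)) \<and>
                  ultrapower_norm U (\<lambda>i. F x i - F y i) = ultrapower_norm U (F (x - y)))"
proof -
  obtain U :: "('a set \<times> nat) filter" where U: "U \<le> grid_filter" "ultrafilter_on UNIV U"
    using exists_ultrafilter_le[OF grid_filter_neq_bot] by blast
  show ?thesis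
  proof (intro exI[of _ UNIV] exI[of _ U] exI[of _ "coarse_embedding f"] conjI allI)
    fix x y
    show "rho_mod f (norm (x - y)) \<le> ultrapower_norm U (\<lambda>i. coarse_embedding f x i - coarse_embedding f y i)"
      and "ultrapower_norm U (\<lambda>i. coarse_embedding f x i - coarse_embedding f y i) \<le> omega_mod f (norm (x - y))"
      using coarse_embedding_bounds[OF assms U(2)] by blast+
    show "ultrapower_norm U (\<lambda>i. coarse_embedding f x i - coarse_embedding f y i)
        = ultrapower_norm U (coarse_embedding f (x - y))"
      by (rule coarse_embedding_translate[OF assms U(2,1)])
  qed (use U nonprincipal_if_le_grid_filter coarse_embedding_in_ultrapower_reps[OF assms] in auto)
qed

end
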